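(* Let $C\subset\mathbb{R}^d$ be an origin-symmetric $d$-polytope and let $\Lambda\subset\mathbb{R}^d$ be a $d$-dimensional lattice, and let $C^\star=\{y: x\cdot y\le1\ \forall x\in C\}$ be the polar body. (1) The width directions of $C$ with respect to $\Lambda$ are exactly the diameter directions of $C^\star$ with respect to $\Lambda^\star$. (2) $C$ is lattice reduced with respect to $\Lambda$ if and only if $C^\star$ is lattice complete with respect to $\Lambda^\star$.
   Context: A lattice $\Lambda\subset\mathbb{R}^d$ is a discrete subgroup spanning $\mathbb{R}^d$; $\Lambda^\star=\{y: x\cdot y\in\mathbb{Z}\ \forall x\in\Lambda\}$ is its dual lattice. For a convex body $K$ (compact convex, non-empty interior) and a lattice $\Gamma$: the lattice width is $\mathrm{wdt}_\Gamma(K)=\min_{y\in\Gamma^\star\setminus\{0\}}\max_{a,b\in K}y\cdot(a-b)$, and width directions are the $y\in\Gamma^\star\setminus\{0\}$ attaining it. A segment $[a,b]$ is a lattice segment w.r.t. $\Gamma$ if $b-a$ is parallel to a nonzero vector of $\Gamma$; its lattice length is $|b-a|/|v|$ with $v$ the generator of $\Gamma\cap\mathrm{span}\{b-a\}$ that is a positive multiple of $b-a$; $\mathrm{diam}_\Gamma(K)$ is the maximal lattice length of a lattice segment in $K$; diameter directions are the $v\in\Gamma\setminus\{0\}$ such that $K$ contains a segment $[a,a+\mathrm{diam}_\Gamma(K)v]$. $K$ is lattice reduced w.r.t. $\Gamma$ if no convex body $K'\subsetneq K$ has the same lattice width; lattice complete if no convex body $K'\supsetneq K$ has the same lattice diameter.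 *)

theory Defs
  imports "HOL-Analysis.Analysis"
begin

definition is_lattice :: "'a::euclidean_space set \<Rightarrow> bool" where
  "is_lattice L \<longleftrightarrow>
     0 \<in> L \<and> (\<forall>x\<in>L. \<forall>y\<in>L. x + y \<in> L) \<and> (\<forall>x\<in>L. - x \<in> L) \<and>
     (\<forall>x\<in>L. \<exists>e>0. ball x e \<inter> L = {x}) \<and>
     span L = UNIV"

definition dual_lattice :: "'a::euclidean_space set \<Rightarrow> 'a set" where
  "dual_lattice L = {y. \<forall>x\<in>L. x \<bullet> y \<in> \<int>}"

definition convex_body :: "'a::euclidean_space set \<Rightarrow> bool" where
  "convex_body K \<longleftrightarrow> compact K \<and> convex K \<and> interior K \<noteq> {}"

definition polar :: "'a::euclidean_space set \<Rightarrow> 'a set" where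
  "polar C = {y. \<forall>x\<in>C. x \<bullet> y \<le> 1}"

definition width_fun :: "'a::euclidean_space set \<Rightarrow> 'a \<Rightarrow> real" where
  "width_fun K y = Sup {y \<bullet> (a - b) | a b. a \<in> K \<and> b \<in> K}"

definition lattice_width :: "'a::euclidean_space set \<Rightarrow> 'a set \<Rightarrow> real" where
  "lattice_width G K = Inf (width_fun K ` (dual_lattice G - {0}))"

definition width_directions :: "'a::euclidean_space set \<Rightarrow> 'a set \<Rightarrow> 'a set" where
  "width_directions G K =
     {y \<in> dual_lattice G - {0}. width_fun K y = lattice_width G K}"

definition lattice_generator :: "'a::euclidean_space set \<Rightarrow> 'a \<Rightarrow> 'a \<Rightarrow> bool" where
  "lattice_generator G u v \<longleftrightarrow>
     v \<in> G \<and> v \<noteq> 0 \<and> (\<exists>s>0. v = s *\<^sub>R u) \<and>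
     G \<inter> span {u} = range (\<lambda>k::int. of_int k *\<^sub>R v)"

definition lattice_segment :: "'a::euclidean_space set \<Rightarrow> 'a \<Rightarrow> 'a \<Rightarrow> bool" where
  "lattice_segment G a b \<longleftrightarrow> (\<exists>v\<in>G. v \<noteq> 0 \<and> (\<exists>t. b - a = t *\<^sub>R v))"

definition lattice_length :: "'a::euclidean_space set \<Rightarrow> 'a \<Rightarrow> 'a \<Rightarrow> real" where
  "lattice_length G a b = norm (b - a) / norm (THE v. lattice_generator G (b - a) v)"

definition lattice_diameter :: "'a::euclidean_space set \<Rightarrow> 'a set \<Rightarrow> real" where
  "lattice_diameter G K =
     Sup {lattice_length G a b | a b. closed_segment a b \<subseteq> K \<and> a \<noteq> b \<and> lattice_segment G a b}"

definition diameter_directions :: "'a::euclidean_space set \<Rightarrow> 'a set \<Rightarrow> 'a set" where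
  "diameter_directions G K =
     {v \<in> G - {0}. \<exists>a. closed_segment a (a + lattice_diameter G K *\<^sub>R v) \<subseteq> K}"

definition lattice_reduced :: "'a::euclidean_space set \<Rightarrow> 'a set \<Rightarrow> bool" where
  "lattice_reduced G K \<longleftrightarrow>
     \<not> (\<exists>K'. convex_body K' \<and> K' \<subset> K \<and> lattice_width G K' = lattice_width G K)"

definition lattice_complete :: "'a::euclidean_space set \<Rightarrow> 'a set \<Rightarrow> bool" where
  "lattice_complete G K \<longleftrightarrow>
     \<not> (\<exists>K'. convex_body K' \<and> K \<subset> K' \<and> lattice_diameter G K' = lattice_diameter G K)"

end

theory Submission
  imports Defs
begin

text \<open>Let \<open>h\<close> be the support function of \<open>C\<close>, so that the width of \<open>C\<close> in direction \<open>y\<close> is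
  \<open>2 h(y)\<close> and the polar body is \<open>{h \<le> 1}\<close>, and let \<open>m\<close> be the minimum of \<open>h\<close> over the nonzero
  dual vectors.  Then the lattice width of \<open>C\<close> is \<open>2m\<close>.  A dual lattice segment \<open>b - a = s g\<close>
  of the polar has \<open>s h(g) \<le> h(a) + h(b) \<le> 2\<close>, so the lattice diameter of the polar is \<open>2/m\<close>,
  attained exactly by the segments \<open>[-y/m, y/m]\<close> with \<open>h(y) = m\<close>; this gives (1).

  For (2), both properties are equivalent to: every vertex \<open>v\<close> of \<open>C\<close> is the only vertex on the
  face of \<open>C\<close> in some width direction.  If a vertex \<open>v\<close> fails this, cutting it off \<open>C\<close>, or
  relaxing its facet inequality in the polar, changes neither the width nor the diameter: in every
  width direction a pair of opposite vertices other than \<open>v\<close> still realises the width, and since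
  \<open>h\<close> takes a discrete set of values on the dual lattice, all other directions have some slack.
  If every vertex has the property, a convex body strictly inside \<open>C\<close> misses some vertex \<open>v\<close> and
  so is thinner in the corresponding width direction \<open>y\<close>, and a convex body strictly containing
  the polar contains a point beyond the facet of \<open>v\<close>, which lets \<open>[-y/m, y/m]\<close> be prolonged.\<close>

lemma dual_lattice_uminus: "x \<in> dual_lattice L \<Longrightarrow> - x \<in> dual_lattice L"
  by (auto simp: dual_lattice_def)

lemma dual_lattice_diff: "x \<in> dual_lattice L \<Longrightarrow> y \<in> dual_lattice L \<Longrightarrow> x - y \<in> dual_lattice L"
  by (auto simp: dual_lattice_def inner_diff_right)

lemma dual_lattice_scaleR_int: "x \<in> dual_lattice L \<Longrightarrow> of_int k *\<^sub>R x \<in> dual_lattice L"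
  by (auto simp: dual_lattice_def)

lemma eq_if_inner_eq_on_spanning_set:
  fixes x y :: "'a::euclidean_space"
  assumes "span B = UNIV" "\<And>b. b \<in> B \<Longrightarrow> b \<bullet> x = b \<bullet> y"
  shows "x = y"
proof -
  have "orthogonal (x - y) (x - y)"
    by (rule orthogonal_to_span[of "x - y" B])
       (use assms in \<open>auto simp: orthogonal_def inner_diff_left inner_diff_right inner_commute\<close>)
  then show ?thesis
    by (simp add: orthogonal_def)
qed

text \<open>A dual vector is determined by its integer inner products with a basis of \<open>L\<close>, and these
  are bounded on a ball.\<close>
lemma finite_dual_lattice_ball:
  fixes L :: "'a::euclidean_space set"
  assumes "span L = UNIV"
  shows "finite {y \<in> dual_lattice L. norm y \<le> R}"
proof -
  obtain B where B: "B \<subseteq> L" "independent B" "L \<subseteq> span B"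
    by (rule basis_exists)
  have "finite B"
    using B(2) independent_imp_finite by blast
  have span_B: "span B = UNIV"
    using assms span_minimal[OF B(3) subspace_span] by auto
  define M where "M = (\<Sum>b\<in>B. norm b) * \<bar>R\<bar>"
  define Z where "Z = (of_int ` {-\<lceil>M\<rceil>..\<lceil>M\<rceil>} :: real set)"
  define f where "f = (\<lambda>y::'a. restrict (\<lambda>b. b \<bullet> y) B)"
  have "inj f"
    by (rule injI, rule eq_if_inner_eq_on_spanning_set[OF span_B])
       (metis f_def restrict_apply')
  have "f ` {y \<in> dual_lattice L. norm y \<le> R} \<subseteq> (\<Pi>\<^sub>E b\<in>B. Z)"
  proof (clarsimp simp: f_def)
    fix y b assume y: "y \<in> dual_lattice L" "norm y \<le> R" and "b \<in> B"
    then have "b \<bullet> y \<in> \<int>"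
      using B(1) by (auto simp: dual_lattice_def)
    then obtain k where k: "b \<bullet> y = of_int k"
      by (auto elim: Ints_cases)
    have "\<bar>b \<bullet> y\<bar> \<le> norm b * \<bar>R\<bar>"
      using Cauchy_Schwarz_ineq2[of b y] y(2) by (smt (verit) mult_left_mono norm_ge_zero)
    also have "\<dots> \<le> M"
      unfolding M_def by (intro mult_right_mono member_le_sum) (use \<open>b \<in> B\<close> \<open>finite B\<close> in auto)
    finally have "\<bar>k\<bar> \<le> \<lceil>M\<rceil>"
      using k by (simp add: le_ceiling_iff)
    then show "b \<bullet> y \<in> Z"
      using k by (auto simp: Z_def abs_le_iff)
  qed
  moreover have "finite (\<Pi>\<^sub>E b\<in>B. Z)"
    using \<open>finite B\<close> by (intro finite_PiE) (auto simp: Z_def)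
  ultimately show ?thesis
    using finite_imageD[OF _ inj_on_subset[OF \<open>inj f\<close> subset_UNIV]] finite_subset by blast
qed

lemma dual_lattice_norm_bounded_below:
  fixes L :: "'a::euclidean_space set"
  assumes "span L = UNIV"
  obtains \<delta> where "\<delta> > 0" "\<And>y. y \<in> dual_lattice L \<Longrightarrow> y \<noteq> 0 \<Longrightarrow> \<delta> \<le> norm y"
proof
  define F where "F = {y \<in> dual_lattice L. norm y \<le> 1} - {0}"
  have "finite F"
    using finite_dual_lattice_ball[OF assms] by (simp add: F_def)
  then show "Min (insert 1 (norm ` F)) > 0"
    by (auto simp: F_def)
  fix y assume "y \<in> dual_lattice L" "y \<noteq> 0"
  then show "Min (insert 1 (norm ` F)) \<le> norm y"
  proof (cases "norm y \<le> 1")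
    case False
    have "Min (insert 1 (norm ` F)) \<le> 1"
      using \<open>finite F\<close> by simp
    with False show ?thesis by simp
  qed (use \<open>finite F\<close> \<open>y \<noteq> 0\<close> \<open>y \<in> dual_lattice L\<close> in \<open>auto simp: F_def\<close>)
qed

text \<open>The minimal positive multiple of \<open>u\<close> in an additive group is the generator of its trace
  on the line through \<open>u\<close>: a non-multiple would leave a smaller positive remainder.\<close>
lemma lattice_generatorI:
  assumes diff: "\<And>x y. x \<in> G \<Longrightarrow> y \<in> G \<Longrightarrow> x - y \<in> G"
    and int_mult: "\<And>k x. x \<in> G \<Longrightarrow> of_int k *\<^sub>R x \<in> G"
    and "c > 0" "c *\<^sub>R u \<in> G" "u \<noteq> 0"
    and minimal: "\<And>c'. 0 < c' \<Longrightarrow> c' < c \<Longrightarrow> c' *\<^sub>R u \<notin> G"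
  shows "lattice_generator G u (c *\<^sub>R u)"
  unfolding lattice_generator_def
proof (intro conjI)
  show "\<exists>s>0. c *\<^sub>R u = s *\<^sub>R u"
    using \<open>c > 0\<close> by blast
  show "G \<inter> span {u} = range (\<lambda>k::int. of_int k *\<^sub>R c *\<^sub>R u)"
  proof (intro equalityI subsetI)
    fix z assume z: "z \<in> G \<inter> span {u}"
    then obtain \<tau> where \<tau>: "z = \<tau> *\<^sub>R u"
      by (auto simp: span_singleton)
    define k where "k = \<lfloor>\<tau> / c\<rfloor>"
    define \<rho> where "\<rho> = \<tau> - of_int k * c"
    have "of_int k \<le> \<tau> / c" "\<tau> / c < of_int k + 1"
      unfolding k_def by linarith+
    then have "0 \<le> \<rho>" "\<rho> < c"
      using \<open>c > 0\<close> by (auto simp: \<rho>_def field_simps)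
    moreover have "\<rho> *\<^sub>R u = z - of_int k *\<^sub>R (c *\<^sub>R u)"
      by (simp add: \<rho>_def \<tau> algebra_simps)
    then have "\<rho> *\<^sub>R u \<in> G"
      using z diff int_mult[OF \<open>c *\<^sub>R u \<in> G\<close>] by auto
    ultimately have "\<rho> = 0"
      using minimal[of \<rho>] by linarith
    then show "z \<in> range (\<lambda>k::int. of_int k *\<^sub>R c *\<^sub>R u)"
      using \<tau> by (auto simp: \<rho>_def)
  next
    fix z assume "z \<in> range (\<lambda>k::int. of_int k *\<^sub>R c *\<^sub>R u)"
    then show "z \<in> G \<inter> span {u}"
      using int_mult[OF \<open>c *\<^sub>R u \<in> G\<close>] by (auto intro: span_mul span_base)
  qed
qed (use assms in simp_all)

lemma lattice_generator_unique:
  assumes "lattice_generator G u g" "lattice_generator G u g'"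
  shows "g = g'"
proof -
  have "g \<in> G \<inter> span {u}" "g' \<in> G \<inter> span {u}"
    using assms by (auto simp: lattice_generator_def intro: span_mul span_base)
  then obtain k k' :: int where k: "g' = of_int k *\<^sub>R g" and k': "g = of_int k' *\<^sub>R g'"
    using assms unfolding lattice_generator_def by blast
  obtain s s' where "s > 0" "g = s *\<^sub>R u" "s' > 0" "g' = s' *\<^sub>R u" "g \<noteq> 0"
    using assms unfolding lattice_generator_def by blast
  then have "s' = of_int k * s"
    using k by auto
  then have "k > 0"
    using \<open>s > 0\<close> \<open>s' > 0\<close> by (simp add: zero_less_mult_iff)
  have "g = of_int (k' * k) *\<^sub>R g"
    using k'[unfolded k] by simp
  then have "k' * k = 1"
    using \<open>g \<noteq> 0\<close> by (metis scaleR_cancel_right scaleR_one of_int_eq_1_iff)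
  then show ?thesis
    using k \<open>k > 0\<close> by (simp add: zmult_eq_1_iff)
qed

lemma lattice_length_eq:
  assumes "lattice_generator G (b - a) g"
  shows "lattice_length G a b = norm (b - a) / norm g"
proof -
  have "(THE v. lattice_generator G (b - a) v) = g"
    using assms lattice_generator_unique by blast
  then show ?thesis
    by (simp add: lattice_length_def)
qed

lemma finite_dual_lattice_multiples:
  fixes L :: "'a::euclidean_space set"
  assumes "span L = UNIV" "u \<noteq> 0"
  shows "finite {c. 0 < c \<and> c \<le> R \<and> c *\<^sub>R u \<in> dual_lattice L}" (is "finite ?Q")
proof -
  have "(\<lambda>c. c *\<^sub>R u) ` ?Q \<subseteq> {y \<in> dual_lattice L. norm y \<le> R * norm u}"
    by (auto simp: mult_right_mono)
  then have "finite ((\<lambda>c. c *\<^sub>R u) ` ?Q)"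
    using finite_dual_lattice_ball[OF assms(1)] finite_subset by blast
  moreover have "inj_on (\<lambda>c. c *\<^sub>R u) ?Q"
    using assms(2) by (auto simp: inj_on_def)
  ultimately show ?thesis
    using finite_imageD by blast
qed

lemma dual_lattice_generator_exists:
  fixes L :: "'a::euclidean_space set"
  assumes "span L = UNIV" "lattice_segment (dual_lattice L) a b" "a \<noteq> b"
  obtains c where "c > 0" "lattice_generator (dual_lattice L) (b - a) (c *\<^sub>R (b - a))"
proof -
  let ?D = "dual_lattice L"
  define u where "u = b - a"
  have "u \<noteq> 0"
    using assms(3) by (simp add: u_def)
  obtain w t where w: "w \<in> ?D" "u = t *\<^sub>R w"
    using assms(2) by (auto simp: lattice_segment_def u_def)
  then have "t \<noteq> 0"
    using \<open>u \<noteq> 0\<close> by auto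
  define c1 where "c1 = 1 / \<bar>t\<bar>"
  have "c1 *\<^sub>R u \<in> ?D"
    using w dual_lattice_uminus[OF w(1)] \<open>t \<noteq> 0\<close> by (cases "t > 0") (auto simp: c1_def)
  define Q where "Q = {c. 0 < c \<and> c \<le> c1 \<and> c *\<^sub>R u \<in> ?D}"
  have "c1 \<in> Q"
    using \<open>t \<noteq> 0\<close> \<open>c1 *\<^sub>R u \<in> ?D\<close> by (simp add: Q_def c1_def)
  have "finite Q"
    unfolding Q_def using finite_dual_lattice_multiples[OF assms(1) \<open>u \<noteq> 0\<close>] .
  define c0 where "c0 = Min Q"
  have "c0 \<in> Q"
    using \<open>finite Q\<close> \<open>c1 \<in> Q\<close> Min_in by (auto simp: c0_def)
  have "lattice_generator ?D u (c0 *\<^sub>R u)"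
  proof (rule lattice_generatorI)
    show "c0 > 0" "c0 *\<^sub>R u \<in> ?D"
      using \<open>c0 \<in> Q\<close> by (auto simp: Q_def)
    fix c' assume "0 < c'" "c' < c0"
    show "c' *\<^sub>R u \<notin> ?D"
    proof
      assume "c' *\<^sub>R u \<in> ?D"
      then have "c' \<in> Q"
        using \<open>0 < c'\<close> \<open>c' < c0\<close> \<open>c0 \<in> Q\<close> by (auto simp: Q_def)
      then show False
        using \<open>c' < c0\<close> Min_le[OF \<open>finite Q\<close>] by (fastforce simp: c0_def)
    qed
  qed (use \<open>u \<noteq> 0\<close> dual_lattice_diff dual_lattice_scaleR_int in auto)
  then show ?thesis
    using that \<open>c0 \<in> Q\<close> by (auto simp: Q_def u_def)
qed

lemma dual_lattice_segment_length:
  fixes L :: "'a::euclidean_space set"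
  assumes "span L = UNIV" "lattice_segment (dual_lattice L) a b" "a \<noteq> b"
  obtains g where "g \<in> dual_lattice L" "g \<noteq> 0" "lattice_length (dual_lattice L) a b > 0"
    "b - a = lattice_length (dual_lattice L) a b *\<^sub>R g"
proof -
  obtain c where "c > 0" and gen: "lattice_generator (dual_lattice L) (b - a) (c *\<^sub>R (b - a))"
    using dual_lattice_generator_exists[OF assms] .
  then have "lattice_length (dual_lattice L) a b = 1 / c"
    using assms(3) by (simp add: lattice_length_eq)
  then show ?thesis
    using that[of "c *\<^sub>R (b - a)"] gen \<open>c > 0\<close> by (auto simp: lattice_generator_def)
qed

lemma bdd_above_dual_lattice_lengths:
  fixes L :: "'a::euclidean_space set"
  assumes "span L = UNIV" "bounded K"
  shows "bdd_above {lattice_length (dual_lattice L) a b | a b.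
    closed_segment a b \<subseteq> K \<and> a \<noteq> b \<and> lattice_segment (dual_lattice L) a b}"
proof -
  obtain \<delta> where \<delta>: "\<delta> > 0" "\<And>y. y \<in> dual_lattice L \<Longrightarrow> y \<noteq> 0 \<Longrightarrow> \<delta> \<le> norm y"
    using dual_lattice_norm_bounded_below[OF assms(1)] by blast
  obtain R where R: "\<And>x. x \<in> K \<Longrightarrow> norm x \<le> R"
    using assms(2) bounded_iff by blast
  have "lattice_length (dual_lattice L) a b \<le> 2 * R / \<delta>"
    if seg: "closed_segment a b \<subseteq> K" "a \<noteq> b" "lattice_segment (dual_lattice L) a b" for a b
  proof -
    let ?l = "lattice_length (dual_lattice L) a b"
    obtain g where g: "g \<in> dual_lattice L" "g \<noteq> 0" "?l > 0" "b - a = ?l *\<^sub>R g"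
      using dual_lattice_segment_length[OF assms(1) seg(3,2)] by blast
    have "?l * \<delta> \<le> ?l * norm g"
      using \<delta>(2)[OF g(1,2)] g(3) by simp
    also have "\<dots> = norm (b - a)"
      using g(3,4) by simp
    also have "\<dots> \<le> 2 * R"
      using R[of a] R[of b] seg(1) ends_in_segment[of a b] norm_triangle_ineq4[of b a] by force
    finally show ?thesis
      using \<delta>(1) by (simp add: field_simps)
  qed
  then show ?thesis
    unfolding bdd_above_def by blast
qed

lemma lattice_length_le_diameter:
  fixes L :: "'a::euclidean_space set"
  assumes "span L = UNIV" "bounded K"
    and "closed_segment a b \<subseteq> K" "a \<noteq> b" "lattice_segment (dual_lattice L) a b"
  shows "lattice_length (dual_lattice L) a b \<le> lattice_diameter (dual_lattice L) K"
  unfolding lattice_diameter_def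
  by (rule cSup_upper) (use assms bdd_above_dual_lattice_lengths in auto)

lemma lattice_diameter_eqI:
  assumes "closed_segment a b \<subseteq> K" "a \<noteq> b" "lattice_segment G a b" "lattice_length G a b = d"
    and "\<And>a b. closed_segment a b \<subseteq> K \<Longrightarrow> a \<noteq> b \<Longrightarrow> lattice_segment G a b \<Longrightarrow>
      lattice_length G a b \<le> d"
  shows "lattice_diameter G K = d"
  unfolding lattice_diameter_def
  by (rule cSup_eq_maximum) (use assms in blast)+

lemma bdd_above_width_values:
  assumes "bounded K"
  shows "bdd_above {y \<bullet> (a - b) | a b. a \<in> K \<and> b \<in> K}"
proof -
  obtain R where R: "\<And>x. x \<in> K \<Longrightarrow> norm x \<le> R"
    using assms bounded_iff by blast
  have "y \<bullet> (a - b) \<le> norm y * (2 * R)" if "a \<in> K" "b \<in> K" for a b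
  proof -
    have "norm (a - b) \<le> 2 * R"
      using R[OF that(1)] R[OF that(2)] norm_triangle_ineq4[of a b] by linarith
    then show ?thesis
      using norm_cauchy_schwarz[of y "a - b"] mult_left_mono[of _ _ "norm y"] by force
  qed
  then show ?thesis
    unfolding bdd_above_def by blast
qed

lemma width_fun_ge: "bounded K \<Longrightarrow> a \<in> K \<Longrightarrow> b \<in> K \<Longrightarrow> y \<bullet> (a - b) \<le> width_fun K y"
  unfolding width_fun_def by (rule cSup_upper) (auto intro: bdd_above_width_values)

lemma width_fun_le:
  assumes "K \<noteq> {}" "\<And>a b. a \<in> K \<Longrightarrow> b \<in> K \<Longrightarrow> y \<bullet> (a - b) \<le> w"
  shows "width_fun K y \<le> w"
  unfolding width_fun_def by (rule cSup_least) (use assms in blast)+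

lemma width_fun_mono:
  "bounded K \<Longrightarrow> K' \<subseteq> K \<Longrightarrow> K' \<noteq> {} \<Longrightarrow> width_fun K' y \<le> width_fun K y"
  by (rule width_fun_le) (auto intro: width_fun_ge)

lemma lattice_width_le_width_fun:
  assumes "bounded K" "K \<noteq> {}" "y \<in> dual_lattice G" "y \<noteq> 0"
  shows "lattice_width G K \<le> width_fun K y"
  unfolding lattice_width_def
proof (rule cInf_lower)
  have "0 \<le> width_fun K z" for z
    using width_fun_ge[OF assms(1), of _ _ z] assms(2) by fastforce
  then show "bdd_below (width_fun K ` (dual_lattice G - {0}))"
    by (auto intro: bdd_belowI[of _ 0])
qed (use assms in auto)

lemma lattice_width_eqI:
  assumes "y \<in> dual_lattice G" "y \<noteq> 0" "width_fun K y = w"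
    and "\<And>z. z \<in> dual_lattice G \<Longrightarrow> z \<noteq> 0 \<Longrightarrow> w \<le> width_fun K z"
  shows "lattice_width G K = w"
  unfolding lattice_width_def
  by (rule cInf_eq_minimum) (use assms in auto)

lemma exists_convex_body_psubset:
  fixes K :: "'a::euclidean_space set"
  assumes "convex_body K"
  obtains K' where "convex_body K'" "K' \<subset> K"
proof -
  obtain x e where "e > 0" "cball x e \<subseteq> K"
    using assms by (auto simp: convex_body_def mem_interior_cball)
  obtain b :: 'a where "b \<in> Basis"
    using nonempty_Basis by blast
  then have "x + e *\<^sub>R b \<in> K - cball x (e / 2)"
    using \<open>e > 0\<close> \<open>cball x e \<subseteq> K\<close> by (auto simp: dist_norm)
  moreover have "convex_body (cball x (e / 2))"
    using \<open>e > 0\<close> by (auto simp: convex_body_def)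
  moreover have "cball x (e / 2) \<subseteq> K"
    using \<open>e > 0\<close> \<open>cball x e \<subseteq> K\<close> subset_cball[of "e / 2" e x] by auto
  ultimately show ?thesis
    using that by blast
qed

lemma exists_convex_body_psupset:
  fixes K :: "'a::euclidean_space set"
  assumes "bounded K"
  obtains K' where "convex_body K'" "K \<subset> K'"
proof -
  obtain R where "R > 0" "K \<subseteq> cball 0 R"
    using assms by (auto simp: bounded_pos subset_iff)
  obtain b :: 'a where "b \<in> Basis"
    using nonempty_Basis by blast
  then have "(R + 1) *\<^sub>R b \<in> cball 0 (R + 1) - K"
    using \<open>R > 0\<close> \<open>K \<subseteq> cball 0 R\<close> by auto
  moreover have "convex_body (cball (0::'a) (R + 1))"
    using \<open>R > 0\<close> by (auto simp: convex_body_def)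
  moreover have "K \<subseteq> cball 0 (R + 1)"
    using \<open>K \<subseteq> cball 0 R\<close> subset_cball[of R "R + 1" 0] by auto
  ultimately show ?thesis
    using that by blast
qed

lemma not_lattice_reduced_if_trivial_dual:
  assumes "dual_lattice G \<subseteq> {0}" "convex_body K"
  shows "\<not> lattice_reduced G K"
proof -
  obtain K' where "convex_body K'" "K' \<subset> K"
    using exists_convex_body_psubset[OF assms(2)] .
  moreover have "lattice_width G K' = lattice_width G K"
  proof -
    have "dual_lattice G - {0} = {}"
      using assms(1) by blast
    then show ?thesis
      unfolding lattice_width_def by (simp only: image_empty)
  qed
  ultimately show ?thesis
    unfolding lattice_reduced_def by blast
qed

lemma not_lattice_complete_if_trivial_lattice:
  assumes "G \<subseteq> {0}" "bounded K"
  shows "\<not> lattice_complete G K"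
proof -
  obtain K' where "convex_body K'" "K \<subset> K'"
    using exists_convex_body_psupset[OF assms(2)] .
  moreover have "\<not> lattice_segment G a b" for a b
    using assms(1) by (auto simp: lattice_segment_def)
  then have "lattice_diameter G K' = lattice_diameter G K"
    by (simp add: lattice_diameter_def)
  ultimately show ?thesis
    unfolding lattice_complete_def by blast
qed

lemma exists_small_param_below_limits:
  fixes f :: "'b \<Rightarrow> real \<Rightarrow> real"
  assumes "finite A" "t > 0"
    and "\<And>a. a \<in> A \<Longrightarrow> (f a \<longlongrightarrow> l a) (at_right 0)" "\<And>a. a \<in> A \<Longrightarrow> l a < c a"
  obtains \<epsilon> where "0 < \<epsilon>" "\<epsilon> < t" "\<And>a. a \<in> A \<Longrightarrow> f a \<epsilon> < c a"
proof -
  have "\<forall>\<^sub>F \<epsilon> in at_right 0. \<forall>a\<in>A. f a \<epsilon> < c a"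
    using assms by (intro eventually_ball_finite) (auto intro: order_tendstoD(2))
  moreover have "\<forall>\<^sub>F \<epsilon> in at_right 0. 0 < \<epsilon> \<and> \<epsilon> < (t::real)"
    using \<open>t > 0\<close> by (auto simp: eventually_at_right_field)
  ultimately have "\<forall>\<^sub>F \<epsilon> in at_right 0. (0 < \<epsilon> \<and> \<epsilon> < t) \<and> (\<forall>a\<in>A. f a \<epsilon> < c a)"
    by eventually_elim blast
  then show ?thesis
    using that eventually_happens'[OF trivial_limit_at_right_real] by blast
qed

locale symmetric_polytope =
  fixes C :: "'a::euclidean_space set"
  assumes polytope: "polytope C" and interior_nonempty: "interior C \<noteq> {}"
    and symmetric: "\<And>x. x \<in> C \<Longrightarrow> - x \<in> C"
begin

definition vertices :: "'a set" where
  "vertices = {v. v extreme_point_of C}"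

definition support :: "'a \<Rightarrow> real" where
  "support y = Max ((\<lambda>u. u \<bullet> y) ` vertices)"

lemma compact_C: "compact C"
  using polytope polytope_imp_compact by blast

lemma convex_C: "convex C"
  using polytope polytope_imp_convex by blast

lemma bounded_C: "bounded C"
  using compact_C compact_imp_bounded by blast

lemma uminus_C: "uminus ` C = C"
  using symmetric by (auto intro: image_eqI[of _ uminus "- _"])

lemma zero_in_interior: "0 \<in> interior C"
proof -
  obtain x where x: "x \<in> interior C"
    using interior_nonempty by blast
  then have "- x \<in> interior C"
    using interior_negations[of C] uminus_C by auto
  then have "(1/2) *\<^sub>R x + (1/2) *\<^sub>R (- x) \<in> interior C"
    using convexD[OF convex_interior[OF convex_C] x, of "- x" "1/2" "1/2"] by simp
  then show ?thesis
    by simp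
qed

lemma zero_in_C: "0 \<in> C"
  using zero_in_interior interior_subset by blast

lemma finite_vertices: "finite vertices"
  unfolding vertices_def
  using finite_polyhedron_extreme_points polytope_imp_polyhedron polytope by blast

lemma C_eq_hull_vertices: "C = convex hull vertices"
  unfolding vertices_def using Krein_Milman_Minkowski compact_C convex_C by blast

lemma vertices_subset: "vertices \<subseteq> C"
  unfolding vertices_def extreme_point_of_def by blast

lemma vertices_nonempty: "vertices \<noteq> {}"
  using C_eq_hull_vertices zero_in_C by auto

lemma uminus_vertex: "v \<in> vertices \<Longrightarrow> - v \<in> vertices"
  using face_of_linear_image[of uminus "{v}" C] uminus_C
  by (simp add: vertices_def linear_uminus face_of_singleton flip: face_of_singleton)

lemma vertex_nonzero: "v \<in> vertices \<Longrightarrow> v \<noteq> 0"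
  using zero_in_interior extreme_point_not_in_interior unfolding vertices_def by blast

lemma vertex_exposed:
  assumes "v \<in> vertices"
  obtains z where "v \<bullet> z = 1" "\<And>u. u \<in> vertices \<Longrightarrow> u \<noteq> v \<Longrightarrow> u \<bullet> z < 1"
proof -
  have "{v} face_of C"
    using assms by (simp add: vertices_def face_of_singleton)
  then have "{v} exposed_face_of C"
    using exposed_face_of_polyhedron polytope_imp_polyhedron polytope by blast
  moreover have "{v} \<noteq> C"
    using interior_nonempty by auto
  ultimately obtain a b where ab: "C \<subseteq> {x. a \<bullet> x \<le> b}" "{v} = C \<inter> {x. a \<bullet> x = b}"
    unfolding exposed_face_of by blast
  have "b > 0"
    using ab zero_in_C vertex_nonzero[OF assms] by force
  have "u \<bullet> ((1 / b) *\<^sub>R a) < 1" if "u \<in> vertices" "u \<noteq> v" for u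
    using ab that vertices_subset \<open>b > 0\<close> by (force simp: inner_commute field_simps)
  moreover have "v \<bullet> ((1 / b) *\<^sub>R a) = 1"
    using ab \<open>b > 0\<close> by (auto simp: inner_commute)
  ultimately show ?thesis
    using that by blast
qed

lemma inner_le_support: "x \<in> C \<Longrightarrow> x \<bullet> y \<le> support y"
proof -
  have "vertices \<subseteq> {x. x \<bullet> y \<le> support y}"
    using finite_vertices by (auto simp: support_def)
  then have "convex hull vertices \<subseteq> {x. x \<bullet> y \<le> support y}"
    by (rule hull_minimal) (simp add: convex_halfspace_le inner_commute[of _ y])
  then show "x \<in> C \<Longrightarrow> x \<bullet> y \<le> support y"
    using C_eq_hull_vertices by auto
qed

lemma support_attained:
  obtains u where "u \<in> vertices" "u \<bullet> y = support y"
proof -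
  have "support y \<in> (\<lambda>u. u \<bullet> y) ` vertices"
    unfolding support_def using finite_vertices vertices_nonempty by (intro Max_in) auto
  then show ?thesis
    using that by (auto simp: image_iff)
qed

lemma support_eqI:
  assumes "u \<in> vertices" "u \<bullet> y = s" "\<And>w. w \<in> vertices \<Longrightarrow> w \<bullet> y \<le> s"
  shows "support y = s"
  using assms finite_vertices unfolding support_def by (intro Max_eqI) auto

lemma support_scaleR: "c \<ge> 0 \<Longrightarrow> support (c *\<^sub>R y) = c * support y"
  by (rule support_attained[of y], rule support_eqI)
     (auto intro: mult_left_mono inner_le_support[OF subsetD[OF vertices_subset]])

lemma support_uminus: "support (- y) = support y"
proof -
  obtain u where u: "u \<in> vertices" "u \<bullet> y = support y"
    using support_attained by blast
  show ?thesis
  proof (rule support_eqI[OF uminus_vertex[OF u(1)]])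
    show "(- u) \<bullet> (- y) = support y"
      using u(2) by simp
    fix w assume "w \<in> vertices"
    then have "(- w) \<bullet> y \<le> support y"
      using uminus_vertex vertices_subset inner_le_support by blast
    then show "w \<bullet> (- y) \<le> support y"
      by simp
  qed
qed

lemma support_diff_le: "support (a - b) \<le> support a + support b"
proof -
  obtain u where u: "u \<in> vertices" "u \<bullet> (a - b) = support (a - b)"
    using support_attained by blast
  have "u \<in> C" "- u \<in> C"
    using u(1) uminus_vertex vertices_subset by auto
  then have "u \<bullet> a \<le> support a" "(- u) \<bullet> b \<le> support b"
    by (blast intro: inner_le_support)+
  then show ?thesis
    using u(2) by (simp add: inner_diff_right)
qed

lemma support_segment_le:
  assumes "b - a = s *\<^sub>R g" "0 \<le> s"
  shows "s * support g \<le> support a + support b"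
  using support_diff_le[of b a] support_scaleR[OF assms(2), of g] assms(1) by simp

lemma support_lower_bound:
  obtains r where "r > 0" "\<And>y. r * norm y \<le> support y"
proof -
  obtain r where "r > 0" "cball 0 r \<subseteq> C"
    using zero_in_interior mem_interior_cball by blast
  moreover have "r * norm y \<le> support y" if "r > 0" "cball 0 r \<subseteq> C" for y
  proof (cases "y = 0")
    case True
    then show ?thesis
      using support_scaleR[of 0 y] by simp
  next
    case False
    then have "(r / norm y) *\<^sub>R y \<in> C"
      using that by auto
    from inner_le_support[OF this, of y] show ?thesis
      using False by (simp add: power2_norm_eq_inner[symmetric] power2_eq_square)
  qed
  ultimately show ?thesis
    using that by blast
qed

lemma support_upper_bound:
  obtains R where "R > 0" "\<And>y. support y \<le> R * norm y"
proof -
  obtain R where R: "R > 0" "\<And>x. x \<in> C \<Longrightarrow> norm x \<le> R"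
    using bounded_C bounded_pos by blast
  have "support y \<le> R * norm y" for y
  proof -
    obtain u where "u \<in> vertices" "u \<bullet> y = support y"
      using support_attained by blast
    then show ?thesis
      using norm_cauchy_schwarz[of u y] R(2)[of u] vertices_subset
      by (smt (verit, best) mult_right_mono norm_ge_zero subsetD)
  qed
  then show ?thesis
    using that R(1) by blast
qed

lemma width_fun_C: "width_fun C y = 2 * support y"
proof (rule antisym)
  show "width_fun C y \<le> 2 * support y"
  proof (rule width_fun_le)
    show "C \<noteq> {}"
      using zero_in_C by blast
    fix a b assume "a \<in> C" "b \<in> C"
    then have "a \<bullet> y \<le> support y" "(- b) \<bullet> y \<le> support y"
      using symmetric inner_le_support by blast+
    then show "y \<bullet> (a - b) \<le> 2 * support y"
      by (simp add: inner_diff_right inner_commute)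
  qed
  obtain u where u: "u \<in> vertices" "u \<bullet> y = support y"
    using support_attained by blast
  then have "y \<bullet> (u - - u) \<le> width_fun C y"
    using vertices_subset uminus_vertex by (intro width_fun_ge bounded_C) auto
  then show "2 * support y \<le> width_fun C y"
    using u(2) by (simp add: inner_add_right inner_commute)
qed

lemma mem_polar_iff: "z \<in> polar C \<longleftrightarrow> support z \<le> 1"
proof
  obtain u where "u \<in> vertices" "u \<bullet> z = support z"
    using support_attained by blast
  then show "z \<in> polar C \<Longrightarrow> support z \<le> 1"
    using vertices_subset by (force simp: polar_def)
  show "support z \<le> 1 \<Longrightarrow> z \<in> polar C"
    using inner_le_support by (auto simp: polar_def intro: order_trans)
qed

lemma mem_polar_iff_vertices: "z \<in> polar C \<longleftrightarrow> (\<forall>u\<in>vertices. u \<bullet> z \<le> 1)"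
  unfolding mem_polar_iff support_def using finite_vertices vertices_nonempty by simp

lemma convex_body_polar: "convex_body (polar C)"
proof -
  have polar_Inter: "polar C = (\<Inter>x\<in>C. {y. x \<bullet> y \<le> 1})"
    by (auto simp: polar_def)
  have "closed (polar C)" "convex (polar C)"
    unfolding polar_Inter by (auto intro!: convex_INT closed_halfspace_le convex_halfspace_le)
  moreover obtain r where r: "r > 0" "\<And>y. r * norm y \<le> support y"
    using support_lower_bound by blast
  have "norm z \<le> 1 / r" if "z \<in> polar C" for z
    using r(2)[of z] that r(1) by (simp add: mem_polar_iff field_simps)
  then have "bounded (polar C)"
    by (auto simp: bounded_iff)
  moreover obtain R where R: "R > 0" "\<And>y. support y \<le> R * norm y"
    using support_upper_bound by blast
  have "ball 0 (1 / R) \<subseteq> polar C"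
  proof
    fix z :: 'a assume "z \<in> ball 0 (1 / R)"
    then have "R * norm z < 1"
      using R(1) by (simp add: field_simps)
    then show "z \<in> polar C"
      using R(2)[of z] by (simp add: mem_polar_iff)
  qed
  then have "ball 0 (1 / R) \<subseteq> interior (polar C)"
    by (rule interior_maximal) simp
  then have "interior (polar C) \<noteq> {}"
    using R(1) by (metis centre_in_ball divide_pos_pos empty_iff subsetD zero_less_one)
  ultimately show ?thesis
    by (auto simp: convex_body_def compact_eq_bounded_closed)
qed

lemma finite_dual_lattice_support_le:
  assumes "span L = UNIV"
  shows "finite {y \<in> dual_lattice L. support y \<le> t}"
proof -
  obtain r where r: "r > 0" "\<And>y. r * norm y \<le> support y"
    using support_lower_bound by blast
  have "{y \<in> dual_lattice L. support y \<le> t} \<subseteq> {y \<in> dual_lattice L. norm y \<le> t / r}"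
    using r by (auto simp: field_simps intro: order_trans)
  then show ?thesis
    using finite_dual_lattice_ball[OF assms] finite_subset by blast
qed

lemma scaleR_mem_C: "0 \<le> \<mu> \<Longrightarrow> \<mu> \<le> 1 \<Longrightarrow> x \<in> C \<Longrightarrow> \<mu> *\<^sub>R x \<in> C"
  using convexD[OF convex_C zero_in_C, of x "1 - \<mu>" \<mu>] by simp

lemma support_minimum_exists:
  assumes "span L = UNIV" "\<not> dual_lattice L \<subseteq> {0}"
  obtains m where "\<exists>y\<in>dual_lattice L - {0}. support y = m"
    "\<And>y. y \<in> dual_lattice L \<Longrightarrow> y \<noteq> 0 \<Longrightarrow> m \<le> support y"
proof -
  obtain y1 where y1: "y1 \<in> dual_lattice L" "y1 \<noteq> 0"
    using assms(2) by blast
  define F where "F = {y \<in> dual_lattice L. support y \<le> support y1} - {0}"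
  have "finite F" "F \<noteq> {}"
    using finite_dual_lattice_support_le[OF assms(1)] y1 by (auto simp: F_def)
  then obtain y0 where "is_arg_min support (\<lambda>y. y \<in> F) y0"
    using ex_is_arg_min_if_finite by blast
  then have y0: "y0 \<in> F" "\<And>y. y \<in> F \<Longrightarrow> support y0 \<le> support y"
    by (auto simp: is_arg_min_linorder)
  show ?thesis
  proof
    show "\<exists>y\<in>dual_lattice L - {0}. support y = support y0"
      using y0(1) by (auto simp: F_def)
    have "support y0 \<le> support y1"
      using y0(2) y1 by (simp add: F_def)
    fix y assume "y \<in> dual_lattice L" "y \<noteq> 0"
    then show "support y0 \<le> support y"
      using y0(2)[of y] \<open>support y0 \<le> support y1\<close> by (force simp: F_def)
  qed
qed

lemma shrunk_hull_without_vertex: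
  assumes "v \<in> vertices" "0 < \<mu>" "\<mu> < 1"
  defines "K \<equiv> convex hull ((vertices - {v}) \<union> (\<lambda>x. \<mu> *\<^sub>R x) ` vertices)"
  shows "convex_body K" "K \<subset> C" "(\<lambda>x. \<mu> *\<^sub>R x) ` C \<subseteq> K"
proof -
  have "(\<lambda>x. \<mu> *\<^sub>R x) ` C = convex hull ((\<lambda>x. \<mu> *\<^sub>R x) ` vertices)"
    using convex_hull_scaling[of \<mu> vertices] C_eq_hull_vertices by metis
  also have "\<dots> \<subseteq> K"
    unfolding K_def by (rule hull_mono) blast
  finally show scaled_C: "(\<lambda>x. \<mu> *\<^sub>R x) ` C \<subseteq> K" .
  have "K \<subseteq> C"
    unfolding K_def using vertices_subset scaleR_mem_C assms(2,3) convex_C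
    by (intro hull_minimal) auto
  moreover have "v \<notin> K"
  proof
    assume "v \<in> K"
    then have "v extreme_point_of K"
      using assms(1) \<open>K \<subseteq> C\<close> by (auto simp: vertices_def extreme_point_of_def)
    then obtain u where u: "u \<in> vertices" "v = \<mu> *\<^sub>R u"
      using extreme_point_of_convex_hull unfolding K_def by blast
    then have "v \<in> open_segment 0 u"
      using vertex_nonzero[of u] assms(2,3) by (auto simp: in_segment)
    moreover have "0 \<in> C" "u \<in> C"
      using zero_in_C u(1) vertices_subset by auto
    ultimately show False
      using assms(1) by (auto simp: vertices_def extreme_point_of_def)
  qed
  ultimately show "K \<subset> C"
    using assms(1) vertices_subset by blast
  have "open ((\<lambda>x. \<mu> *\<^sub>R x) ` interior C)"
    using assms(2) by (intro open_scaling) auto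
  moreover have "(\<lambda>x. \<mu> *\<^sub>R x) ` interior C \<subseteq> K"
    using scaled_C interior_subset by blast
  ultimately have "(\<lambda>x. \<mu> *\<^sub>R x) ` interior C \<subseteq> interior K"
    by (rule interior_maximal[rotated])
  then have "interior K \<noteq> {}"
    using interior_nonempty by blast
  moreover have "compact K"
    unfolding K_def using finite_vertices by (intro compact_convex_hull finite_imp_compact) auto
  ultimately show "convex_body K"
    by (simp add: convex_body_def K_def)
qed

definition relaxed_polar :: "'a \<Rightarrow> real \<Rightarrow> 'a set" where
  "relaxed_polar v t = {x. v \<bullet> x \<le> 1 + t \<and> (\<forall>u\<in>vertices - {v}. u \<bullet> x \<le> 1)}"

lemma polar_subset_relaxed_polar:
  "v \<in> vertices \<Longrightarrow> 0 \<le> t \<Longrightarrow> polar C \<subseteq> relaxed_polar v t"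
  by (force simp: relaxed_polar_def mem_polar_iff_vertices)

lemma support_le_relaxed_polar: "0 \<le> t \<Longrightarrow> x \<in> relaxed_polar v t \<Longrightarrow> support x \<le> 1 + t"
  unfolding support_def relaxed_polar_def using finite_vertices vertices_nonempty
  by force

lemma convex_body_relaxed_polar:
  assumes "v \<in> vertices" "0 \<le> t"
  shows "convex_body (relaxed_polar v t)"
proof -
  have eq: "relaxed_polar v t = {x. v \<bullet> x \<le> 1 + t} \<inter> (\<Inter>u\<in>vertices - {v}. {x. u \<bullet> x \<le> 1})"
    by (auto simp: relaxed_polar_def)
  have "closed (relaxed_polar v t)" "convex (relaxed_polar v t)"
    unfolding eq by (auto intro!: convex_INT convex_Int closed_halfspace_le convex_halfspace_le)
  moreover obtain r where r: "r > 0" "\<And>y. r * norm y \<le> support y"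
    using support_lower_bound by blast
  have "norm x \<le> (1 + t) / r" if "x \<in> relaxed_polar v t" for x
    using r(2)[of x] support_le_relaxed_polar[OF assms(2) that] r(1) by (simp add: field_simps)
  then have "bounded (relaxed_polar v t)"
    by (auto simp: bounded_iff)
  moreover have "interior (relaxed_polar v t) \<noteq> {}"
    using convex_body_polar interior_mono[OF polar_subset_relaxed_polar[OF assms]]
    by (auto simp: convex_body_def)
  ultimately show ?thesis
    by (auto simp: convex_body_def compact_eq_bounded_closed)
qed

lemma polar_psubset_relaxed_polar:
  assumes "v \<in> vertices" "t > 0"
  shows "polar C \<subset> relaxed_polar v t"
proof -
  obtain z where z: "v \<bullet> z = 1" "\<And>u. u \<in> vertices \<Longrightarrow> u \<noteq> v \<Longrightarrow> u \<bullet> z < 1"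
    using vertex_exposed[OF assms(1)] by blast
  have lim: "((\<lambda>\<epsilon>. (1 + \<epsilon>) * (u \<bullet> z)) \<longlongrightarrow> u \<bullet> z) (at_right 0)" for u
  proof -
    have "((\<lambda>\<epsilon>. (1 + \<epsilon>) * (u \<bullet> z)) \<longlongrightarrow> (1 + 0) * (u \<bullet> z)) (at_right 0)"
      by (intro tendsto_intros)
    then show ?thesis
      by simp
  qed
  obtain \<epsilon> where \<epsilon>: "0 < \<epsilon>" "\<epsilon> < t" "\<And>u. u \<in> vertices - {v} \<Longrightarrow> (1 + \<epsilon>) * (u \<bullet> z) < 1"
    by (rule exists_small_param_below_limits[of "vertices - {v}" t "\<lambda>u \<epsilon>. (1 + \<epsilon>) * (u \<bullet> z)"
          "\<lambda>u. u \<bullet> z" "\<lambda>_. 1"])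
       (use finite_vertices assms(2) z(2) lim in auto)
  have "(1 + \<epsilon>) *\<^sub>R z \<in> relaxed_polar v t"
    using \<epsilon> z(1) by (auto simp: relaxed_polar_def intro: less_imp_le)
  moreover have "v \<bullet> ((1 + \<epsilon>) *\<^sub>R z) > 1"
    using \<epsilon>(1) z(1) by simp
  then have "(1 + \<epsilon>) *\<^sub>R z \<notin> polar C"
    using assms(1) by (auto simp only: mem_polar_iff_vertices not_le)
  ultimately show ?thesis
    using polar_subset_relaxed_polar[OF assms(1) less_imp_le[OF assms(2)]] by blast
qed

lemma not_reduced_not_complete_if_trivial_dual:
  assumes "dual_lattice \<Lambda> \<subseteq> {0}"
  shows "\<not> lattice_reduced \<Lambda> C" "\<not> lattice_complete (dual_lattice \<Lambda>) (polar C)"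
proof -
  have "convex_body C"
    using compact_C convex_C interior_nonempty by (simp add: convex_body_def)
  then show "\<not> lattice_reduced \<Lambda> C"
    by (rule not_lattice_reduced_if_trivial_dual[OF assms])
  show "\<not> lattice_complete (dual_lattice \<Lambda>) (polar C)"
    using not_lattice_complete_if_trivial_lattice[OF assms] convex_body_polar
    by (simp add: convex_body_def compact_imp_bounded)
qed

end

locale symmetric_polytope_lattice = symmetric_polytope +
  fixes L :: "'a set" and m :: real
  assumes span_L: "span L = UNIV"
    and minimum_attained: "\<exists>y\<in>dual_lattice L - {0}. support y = m"
    and minimum_le: "\<And>y. y \<in> dual_lattice L \<Longrightarrow> y \<noteq> 0 \<Longrightarrow> m \<le> support y"
begin

definition min_directions :: "'a set" where
  "min_directions = {y \<in> dual_lattice L - {0}. support y = m}"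

lemma min_directions_nonempty: "min_directions \<noteq> {}"
  using minimum_attained by (auto simp: min_directions_def)

lemma m_pos: "m > 0"
proof -
  obtain y where y: "y \<in> dual_lattice L" "y \<noteq> 0" "support y = m"
    using minimum_attained by blast
  obtain r where r: "r > 0" "\<And>y. r * norm y \<le> support y"
    using support_lower_bound by blast
  have "0 < r * norm y"
    using r(1) y(2) by simp
  then show ?thesis
    using r(2)[of y] y(3) by linarith
qed

lemma uminus_min_direction: "y \<in> min_directions \<Longrightarrow> - y \<in> min_directions"
  by (simp add: min_directions_def support_uminus dual_lattice_uminus)

lemma next_support_value:
  obtains m2 where "m2 > m" "\<And>y. y \<in> dual_lattice L \<Longrightarrow> m < support y \<Longrightarrow> m2 \<le> support y"
proof
  define F where "F = {y \<in> dual_lattice L. support y \<le> m + 1} \<inter> {y. m < support y}"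
  have "finite F"
    using finite_dual_lattice_support_le[OF span_L] by (simp add: F_def)
  then show "Min (insert (m + 1) (support ` F)) > m"
    by (auto simp: F_def)
  fix y assume "y \<in> dual_lattice L" "m < support y"
  show "Min (insert (m + 1) (support ` F)) \<le> support y"
  proof (cases "support y \<le> m + 1")
    case True
    then show ?thesis
      using \<open>finite F\<close> \<open>y \<in> dual_lattice L\<close> \<open>m < support y\<close> by (simp add: F_def)
  next
    case False
    have "Min (insert (m + 1) (support ` F)) \<le> m + 1"
      using \<open>finite F\<close> by simp
    with False show ?thesis
      by linarith
  qed
qed

lemma lattice_width_C: "lattice_width L C = 2 * m"
proof -
  obtain y where "y \<in> min_directions"
    using min_directions_nonempty by blast
  then show ?thesis
    using minimum_le by (intro lattice_width_eqI[of y]) (auto simp: min_directions_def width_fun_C)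
qed

lemma width_directions_eq: "width_directions L C = min_directions"
  unfolding width_directions_def min_directions_def lattice_width_C width_fun_C by auto

text \<open>A vector of minimal support is primitive in the dual lattice, since a shorter multiple
  would have smaller support.\<close>
lemma min_direction_segment:
  assumes "y \<in> min_directions" "c > 0" "b - a = c *\<^sub>R y"
  shows "a \<noteq> b" "lattice_segment (dual_lattice L) a b" "lattice_length (dual_lattice L) a b = c"
proof -
  have y: "y \<in> dual_lattice L" "y \<noteq> 0" "support y = m"
    using assms(1) by (auto simp: min_directions_def)
  show "a \<noteq> b" "lattice_segment (dual_lattice L) a b"
    unfolding lattice_segment_def using y assms(2,3) by auto
  have "lattice_generator (dual_lattice L) (b - a) ((1 / c) *\<^sub>R (b - a))"
  proof (rule lattice_generatorI)
    show "(1 / c) *\<^sub>R (b - a) \<in> dual_lattice L"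
      using y assms(2,3) by simp
    fix c' assume c': "0 < c'" "c' < 1 / c"
    show "c' *\<^sub>R (b - a) \<notin> dual_lattice L"
    proof
      assume "c' *\<^sub>R (b - a) \<in> dual_lattice L"
      then have "m \<le> support ((c' * c) *\<^sub>R y)"
        using minimum_le c' assms(2,3) y(2) by simp
      also have "\<dots> = c' * c * m"
        using support_scaleR[of "c' * c" y] c'(1) assms(2) y(3) by simp
      finally show False
        using c' assms(2) m_pos by (simp add: field_simps)
    qed
  qed (use assms(2,3) y dual_lattice_diff dual_lattice_scaleR_int in auto)
  then show "lattice_length (dual_lattice L) a b = c"
    using assms(2,3) y(2) by (simp add: lattice_length_eq)
qed

lemma min_direction_polar_segment:
  assumes "y \<in> min_directions"
  shows "closed_segment (- (1 / m) *\<^sub>R y) ((1 / m) *\<^sub>R y) \<subseteq> polar C"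
proof -
  have "(1 / m) *\<^sub>R y \<in> polar C"
    using assms m_pos support_scaleR[of "1 / m" y] by (simp add: mem_polar_iff min_directions_def)
  moreover then have "- (1 / m) *\<^sub>R y \<in> polar C"
    using support_uminus[of "(1 / m) *\<^sub>R y"] by (simp add: mem_polar_iff)
  ultimately show ?thesis
    using convex_body_polar closed_segment_subset by (auto simp: convex_body_def)
qed

lemma lattice_diameter_polar: "lattice_diameter (dual_lattice L) (polar C) = 2 / m"
proof -
  obtain y where y: "y \<in> min_directions"
    using min_directions_nonempty by blast
  have "(1 / m) *\<^sub>R y - - (1 / m) *\<^sub>R y = (2 / m) *\<^sub>R y"
    by (simp add: scaleR_2 flip: scaleR_add_left)
  note seg = min_direction_segment[OF y _ this]
  show ?thesis
  proof (rule lattice_diameter_eqI[OF min_direction_polar_segment[OF y] seg])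
    fix a b assume ab: "closed_segment a b \<subseteq> polar C" "a \<noteq> b" "lattice_segment (dual_lattice L) a b"
    let ?l = "lattice_length (dual_lattice L) a b"
    obtain g where g: "g \<in> dual_lattice L" "g \<noteq> 0" "?l > 0" "b - a = ?l *\<^sub>R g"
      using dual_lattice_segment_length[OF span_L ab(3,2)] by blast
    have "a \<in> polar C" "b \<in> polar C"
      using ab(1) ends_in_segment by blast+
    then have "?l * support g \<le> 2"
      using support_segment_le[OF g(4)] g(3) by (simp add: mem_polar_iff)
    moreover have "?l * m \<le> ?l * support g"
      using minimum_le[OF g(1,2)] g(3) by simp
    ultimately show "?l \<le> 2 / m"
      using m_pos by (simp add: field_simps)
  qed (use m_pos in simp_all)
qed

lemma diameter_directions_eq: "diameter_directions (dual_lattice L) (polar C) = min_directions"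
proof (intro equalityI subsetI)
  fix v assume "v \<in> diameter_directions (dual_lattice L) (polar C)"
  then obtain a where v: "v \<in> dual_lattice L" "v \<noteq> 0"
    and seg: "closed_segment a (a + (2 / m) *\<^sub>R v) \<subseteq> polar C"
    unfolding diameter_directions_def lattice_diameter_polar by blast
  have "a \<in> polar C" "a + (2 / m) *\<^sub>R v \<in> polar C"
    using seg ends_in_segment by blast+
  then have "(2 / m) * support v \<le> 2"
    using support_segment_le[of "a + (2 / m) *\<^sub>R v" a "2 / m" v] m_pos by (simp add: mem_polar_iff)
  then show "v \<in> min_directions"
    using minimum_le[OF v] v m_pos by (simp add: min_directions_def field_simps)
next
  fix v assume v: "v \<in> min_directions"
  have "- (1 / m) + 2 / m = 1 / m"
    by (simp add: field_simps)
  then have "- (1 / m) *\<^sub>R v + (2 / m) *\<^sub>R v = (1 / m) *\<^sub>R v"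
    by (metis scaleR_add_left)
  then have "closed_segment (- (1 / m) *\<^sub>R v) (- (1 / m) *\<^sub>R v + (2 / m) *\<^sub>R v) \<subseteq> polar C"
    using min_direction_polar_segment[OF v] by simp
  moreover have "v \<in> dual_lattice L - {0}"
    using v by (simp add: min_directions_def)
  ultimately show "v \<in> diameter_directions (dual_lattice L) (polar C)"
    unfolding diameter_directions_def lattice_diameter_polar by blast
qed

definition width_exposed :: "'a \<Rightarrow> bool" where
  "width_exposed v \<longleftrightarrow> (\<exists>y\<in>min_directions. \<forall>u\<in>vertices. u \<bullet> y = m \<longleftrightarrow> u = v)"

lemma exposed_face_eq_vertex:
  assumes "y \<in> min_directions" "\<And>u. u \<in> vertices \<Longrightarrow> u \<bullet> y = m \<longleftrightarrow> u = v"
    and "x \<in> C" "x \<bullet> y = m"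
  shows "x = v"
proof -
  define F where "F = C \<inter> {x. y \<bullet> x = m}"
  have "support y = m"
    using assms(1) by (simp add: min_directions_def)
  then have "\<And>x. x \<in> C \<Longrightarrow> y \<bullet> x \<le> m"
    using inner_le_support by (metis inner_commute)
  then have "F face_of C"
    unfolding F_def by (rule face_of_Int_supporting_hyperplane_le[OF convex_C])
  then have "F = convex hull {w. w extreme_point_of F}"
    unfolding F_def
    by (intro Krein_Milman_Minkowski compact_Int_closed compact_C closed_hyperplane)
       (auto dest: face_of_imp_convex)
  also have "\<dots> \<subseteq> convex hull {v}"
    using extreme_point_of_face[OF \<open>F face_of C\<close>] assms(2)
    by (intro hull_mono) (auto simp: F_def vertices_def inner_commute)
  finally show ?thesis
    using assms(3,4) by (auto simp: F_def inner_commute)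
qed

lemma other_vertex_on_min_direction:
  assumes "\<not> width_exposed v" "y \<in> min_directions"
  obtains u where "u \<in> vertices" "u \<noteq> v" "u \<noteq> - v" "u \<bullet> y = m"
proof -
  have other: "\<exists>u\<in>vertices. u \<noteq> v \<and> u \<bullet> z = m" if z: "z \<in> min_directions" for z
  proof (rule ccontr)
    assume none: "\<not> (\<exists>u\<in>vertices. u \<noteq> v \<and> u \<bullet> z = m)"
    obtain w where w: "w \<in> vertices" "w \<bullet> z = support z"
      using support_attained by blast
    then have "w = v" "support z = m"
      using none z by (auto simp: min_directions_def)
    then have "\<forall>u\<in>vertices. u \<bullet> z = m \<longleftrightarrow> u = v"
      using none w by auto
    then show False
      using assms(1) z unfolding width_exposed_def by blast
  qed
  obtain u where u: "u \<in> vertices" "u \<noteq> v" "u \<bullet> y = m"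
    using other[OF assms(2)] by blast
  show ?thesis
  proof (cases "u = - v")
    case False
    then show ?thesis
      using that u by blast
  next
    case True
    obtain w where w: "w \<in> vertices" "w \<noteq> v" "w \<bullet> (- y) = m"
      using other[OF uminus_min_direction[OF assms(2)]] by blast
    have "- w \<noteq> v"
    proof
      assume "- w = v"
      then have "u = w"
        using True by (metis minus_minus)
      then show False
        using u(3) w(3) m_pos by simp
    qed
    show ?thesis
    proof (rule that[of "- w"])
      show "- w \<in> vertices"
        using uminus_vertex[OF w(1)] .
    qed (use \<open>- w \<noteq> v\<close> w(2,3) in auto)
  qed
qed

lemma width_fun_lt_if_exposed_vertex_missing:
  assumes y: "y \<in> min_directions" "\<And>u. u \<in> vertices \<Longrightarrow> u \<bullet> y = m \<longleftrightarrow> u = v"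
    and K: "compact K" "K \<noteq> {}" "K \<subseteq> C" "v \<notin> K"
  shows "width_fun K y < 2 * m"
proof -
  have "support y = m"
    using y(1) by (simp add: min_directions_def)
  have "continuous_on K (\<lambda>x. x \<bullet> y)"
    by (intro continuous_intros)
  then have "\<exists>x1\<in>K. \<forall>x\<in>K. x \<bullet> y \<le> x1 \<bullet> y"
    by (rule continuous_attains_sup[OF K(1,2)])
  then obtain x1 where x1: "x1 \<in> K" "\<And>x. x \<in> K \<Longrightarrow> x \<bullet> y \<le> x1 \<bullet> y"
    by blast
  have "x1 \<bullet> y \<le> m"
    using inner_le_support[of x1 y] x1(1) K(3) \<open>support y = m\<close> by auto
  moreover have "x1 \<bullet> y \<noteq> m"
    using exposed_face_eq_vertex[OF y, of x1] x1(1) K(3,4) by auto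
  moreover have "width_fun K y \<le> x1 \<bullet> y + m"
  proof (rule width_fun_le[OF K(2)])
    fix a b assume "a \<in> K" "b \<in> K"
    then have "a \<bullet> y \<le> x1 \<bullet> y" "(- b) \<bullet> y \<le> m"
      using x1(2) inner_le_support[of "- b" y] symmetric K(3) \<open>support y = m\<close> by auto
    then show "y \<bullet> (a - b) \<le> x1 \<bullet> y + m"
      by (simp add: inner_diff_right inner_commute)
  qed
  ultimately show ?thesis
    by linarith
qed

lemma lattice_reduced_if_width_exposed:
  assumes "\<And>v. v \<in> vertices \<Longrightarrow> width_exposed v"
  shows "lattice_reduced L C"
  unfolding lattice_reduced_def
proof
  assume "\<exists>K. convex_body K \<and> K \<subset> C \<and> lattice_width L K = lattice_width L C"
  then obtain K where K: "convex_body K" "K \<subset> C" "lattice_width L K = 2 * m"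
    using lattice_width_C by auto
  then have "compact K" "convex K" "K \<noteq> {}"
    by (auto simp: convex_body_def)
  have "\<not> vertices \<subseteq> K"
  proof
    assume "vertices \<subseteq> K"
    then have "convex hull vertices \<subseteq> K"
      using \<open>convex K\<close> by (rule hull_minimal)
    then show False
      using K(2) unfolding C_eq_hull_vertices[symmetric] by blast
  qed
  then obtain v where v: "v \<in> vertices" "v \<notin> K"
    by blast
  then obtain y where y: "y \<in> min_directions" "\<And>u. u \<in> vertices \<Longrightarrow> u \<bullet> y = m \<longleftrightarrow> u = v"
    using assms unfolding width_exposed_def by blast
  have "width_fun K y < 2 * m"
    using width_fun_lt_if_exposed_vertex_missing[OF y \<open>compact K\<close> \<open>K \<noteq> {}\<close>] K(2) v(2) by blast
  moreover have "lattice_width L K \<le> width_fun K y"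
    using \<open>compact K\<close> \<open>K \<noteq> {}\<close> y(1)
    by (intro lattice_width_le_width_fun) (auto simp: compact_imp_bounded min_directions_def)
  ultimately show False
    using K(3) by linarith
qed

text \<open>Removing a vertex that is not width exposed keeps both endpoints of a width-attaining
  segment in every minimal direction; in the other directions the dilate \<open>\<mu> C\<close> suffices.\<close>
lemma width_fun_shrunk_hull_ge:
  assumes "v \<in> vertices" "\<not> width_exposed v" "0 < \<mu>" "\<mu> < 1"
    and large: "\<And>y. y \<in> dual_lattice L \<Longrightarrow> m < support y \<Longrightarrow> m \<le> \<mu> * support y"
    and z: "z \<in> dual_lattice L" "z \<noteq> 0"
  shows "2 * m \<le> width_fun (convex hull ((vertices - {v}) \<union> (\<lambda>x. \<mu> *\<^sub>R x) ` vertices)) z"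
    (is "_ \<le> width_fun ?K z")
proof -
  have "bounded ?K" "(\<lambda>x. \<mu> *\<^sub>R x) ` C \<subseteq> ?K"
    using shrunk_hull_without_vertex[OF assms(1,3,4)] by (auto simp: convex_body_def compact_imp_bounded)
  have "vertices - {v} \<subseteq> ?K"
    by (rule subset_trans[OF _ hull_subset]) blast
  show ?thesis
  proof (cases "support z = m")
    case True
    then obtain u where u: "u \<in> vertices" "u \<noteq> v" "u \<noteq> - v" "u \<bullet> z = m"
      using other_vertex_on_min_direction[OF assms(2), of z] z by (auto simp: min_directions_def)
    then have "u \<in> ?K" "- u \<in> ?K"
      using \<open>vertices - {v} \<subseteq> ?K\<close> uminus_vertex by force+
    then have "z \<bullet> (u - - u) \<le> width_fun ?K z"
      by (rule width_fun_ge[OF \<open>bounded ?K\<close>])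
    then show ?thesis
      using u(4) by (simp add: inner_add_right inner_commute)
  next
    case False
    then have "m \<le> \<mu> * support z"
      using large minimum_le z by force
    obtain u where u: "u \<in> vertices" "u \<bullet> z = support z"
      using support_attained by blast
    then have "\<mu> *\<^sub>R u \<in> ?K" "\<mu> *\<^sub>R (- u) \<in> ?K"
      using \<open>(\<lambda>x. \<mu> *\<^sub>R x) ` C \<subseteq> ?K\<close> vertices_subset symmetric by blast+
    then have "z \<bullet> (\<mu> *\<^sub>R u - \<mu> *\<^sub>R (- u)) \<le> width_fun ?K z"
      by (rule width_fun_ge[OF \<open>bounded ?K\<close>])
    then show ?thesis
      using u(2) \<open>m \<le> \<mu> * support z\<close> by (simp add: inner_add_right inner_commute)
  qed
qed

lemma lattice_width_shrunk_hull:
  assumes "v \<in> vertices" "\<not> width_exposed v" "0 < \<mu>" "\<mu> < 1"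
    and "\<And>y. y \<in> dual_lattice L \<Longrightarrow> m < support y \<Longrightarrow> m \<le> \<mu> * support y"
  shows "lattice_width L (convex hull ((vertices - {v}) \<union> (\<lambda>x. \<mu> *\<^sub>R x) ` vertices)) = 2 * m"
    (is "lattice_width L ?K = _")
proof -
  have K: "convex_body ?K" "?K \<subset> C"
    using shrunk_hull_without_vertex[OF assms(1,3,4)] by auto
  obtain y where y: "y \<in> min_directions"
    using min_directions_nonempty by blast
  have "?K \<noteq> {}"
    using K(1) by (auto simp: convex_body_def)
  then have "width_fun ?K y \<le> width_fun C y"
    using K(2) by (intro width_fun_mono bounded_C) auto
  also have "\<dots> = 2 * m"
    using y by (simp add: width_fun_C min_directions_def)
  finally show ?thesis
    using width_fun_shrunk_hull_ge[OF assms] y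
    by (intro lattice_width_eqI[of y]) (auto simp: min_directions_def intro: antisym)
qed

lemma width_exposed_if_lattice_reduced:
  assumes "lattice_reduced L C" "v \<in> vertices"
  shows "width_exposed v"
proof (rule ccontr)
  assume "\<not> width_exposed v"
  obtain m2 where m2: "m2 > m" "\<And>y. y \<in> dual_lattice L \<Longrightarrow> m < support y \<Longrightarrow> m2 \<le> support y"
    using next_support_value by blast
  define \<mu> where "\<mu> = m / m2"
  have \<mu>: "0 < \<mu>" "\<mu> < 1" "\<mu> * m2 = m"
    using m2(1) m_pos by (auto simp: \<mu>_def)
  have "m \<le> \<mu> * support y" if "y \<in> dual_lattice L" "m < support y" for y
    using mult_left_mono[OF m2(2)[OF that], of \<mu>] \<mu> by simp
  then have "lattice_width L (convex hull ((vertices - {v}) \<union> (\<lambda>x. \<mu> *\<^sub>R x) ` vertices)) =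
      lattice_width L C"
    using lattice_width_shrunk_hull[OF assms(2) \<open>\<not> width_exposed v\<close> \<mu>(1,2)] lattice_width_C by simp
  then show False
    using assms(1) shrunk_hull_without_vertex[OF assms(2) \<mu>(1,2)] unfolding lattice_reduced_def by blast
qed

lemma inner_other_vertex_lt:
  assumes "y \<in> min_directions" "\<And>u. u \<in> vertices \<Longrightarrow> u \<bullet> y = m \<longleftrightarrow> u = v"
    and "u \<in> vertices" "u \<noteq> v"
  shows "u \<bullet> y < m"
  using inner_le_support[of u y] assms vertices_subset
  by (force simp: min_directions_def order_le_less)

text \<open>The weight \<open>\<kappa>\<close> of \<open>p\<close> is chosen so that the facet inequality of \<open>v\<close> stays tight at
  the other endpoint \<open>z\<close>; the other vertices have slack at \<open>y/m\<close>, hence at \<open>z\<close> for small \<open>\<epsilon>\<close>.\<close>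
lemma min_direction_extension:
  assumes "y \<in> min_directions" "\<And>u. u \<in> vertices \<Longrightarrow> u \<bullet> y = m \<longleftrightarrow> u = v"
    and "v \<in> vertices" "1 < v \<bullet> p"
  obtains \<epsilon> z \<kappa> where "\<epsilon> > 0" "z \<in> polar C" "0 \<le> \<kappa>" "\<kappa> \<le> 1"
    "(1 / m + \<epsilon>) *\<^sub>R y = (1 - \<kappa>) *\<^sub>R z + \<kappa> *\<^sub>R p"
proof -
  define \<theta> where "\<theta> = v \<bullet> p - 1"
  have "\<theta> > 0"
    using assms(4) by (simp add: \<theta>_def)
  define \<kappa> where "\<kappa> \<epsilon> = \<epsilon> * m / \<theta>" for \<epsilon>
  define z where "z \<epsilon> = (1 / (1 - \<kappa> \<epsilon>)) *\<^sub>R ((1 / m + \<epsilon>) *\<^sub>R y - \<kappa> \<epsilon> *\<^sub>R p)" for \<epsilon>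
  have "v \<bullet> y = m"
    using assms(2,3) by blast
  have lim: "((\<lambda>\<epsilon>. u \<bullet> z \<epsilon>) \<longlongrightarrow> u \<bullet> y / m) (at_right 0)" for u
  proof -
    have "((\<lambda>\<epsilon>. u \<bullet> z \<epsilon>) \<longlongrightarrow> u \<bullet> z 0) (at_right 0)"
      using \<open>\<theta> > 0\<close> unfolding z_def \<kappa>_def by (intro tendsto_intros) auto
    then show ?thesis
      by (simp add: z_def \<kappa>_def)
  qed
  have slack: "u \<bullet> y / m < 1" if "u \<in> vertices - {v}" for u
    using inner_other_vertex_lt[OF assms(1,2)] that m_pos by simp
  obtain \<epsilon> where \<epsilon>: "0 < \<epsilon>" "\<epsilon> < \<theta> / m" "\<And>u. u \<in> vertices - {v} \<Longrightarrow> u \<bullet> z \<epsilon> < 1"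
    by (rule exists_small_param_below_limits[of "vertices - {v}" "\<theta> / m" "\<lambda>u \<epsilon>. u \<bullet> z \<epsilon>"
          "\<lambda>u. u \<bullet> y / m" "\<lambda>_. 1"])
       (use finite_vertices \<open>\<theta> > 0\<close> m_pos lim slack in auto)
  have \<kappa>: "0 < \<kappa> \<epsilon>" "\<kappa> \<epsilon> < 1"
    using \<epsilon>(1,2) \<open>\<theta> > 0\<close> m_pos by (auto simp: \<kappa>_def field_simps)
  have "\<kappa> \<epsilon> * \<theta> = \<epsilon> * m"
    using \<open>\<theta> > 0\<close> by (simp add: \<kappa>_def)
  then have "v \<bullet> ((1 / m + \<epsilon>) *\<^sub>R y - \<kappa> \<epsilon> *\<^sub>R p) = 1 - \<kappa> \<epsilon>"
    using \<open>v \<bullet> y = m\<close> m_pos by (simp add: inner_diff_right \<theta>_def field_simps)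
  then have "v \<bullet> z \<epsilon> = 1"
    using \<kappa> by (simp add: z_def)
  have "z \<epsilon> \<in> polar C"
    unfolding mem_polar_iff_vertices
  proof
    fix u assume "u \<in> vertices"
    then show "u \<bullet> z \<epsilon> \<le> 1"
      using \<epsilon>(3)[of u] \<open>v \<bullet> z \<epsilon> = 1\<close> by (cases "u = v") auto
  qed
  moreover have "(1 / m + \<epsilon>) *\<^sub>R y = (1 - \<kappa> \<epsilon>) *\<^sub>R z \<epsilon> + \<kappa> \<epsilon> *\<^sub>R p"
    using \<kappa> by (simp add: z_def)
  ultimately show ?thesis
    using that[of \<epsilon> "z \<epsilon>" "\<kappa> \<epsilon>"] \<epsilon>(1) \<kappa> by simp
qed

lemma lattice_complete_if_width_exposed:
  assumes "\<And>v. v \<in> vertices \<Longrightarrow> width_exposed v"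
  shows "lattice_complete (dual_lattice L) (polar C)"
  unfolding lattice_complete_def
proof
  assume "\<exists>K. convex_body K \<and> polar C \<subset> K \<and>
    lattice_diameter (dual_lattice L) K = lattice_diameter (dual_lattice L) (polar C)"
  then obtain K where K: "convex_body K" "polar C \<subset> K" "lattice_diameter (dual_lattice L) K = 2 / m"
    using lattice_diameter_polar by auto
  then have "convex K" "bounded K"
    by (auto simp: convex_body_def compact_imp_bounded)
  obtain p where p: "p \<in> K" "p \<notin> polar C"
    using K(2) by blast
  then obtain v where v: "v \<in> vertices" "1 < v \<bullet> p"
    unfolding mem_polar_iff_vertices by (auto simp: not_le)
  then obtain y where y: "y \<in> min_directions" "\<And>u. u \<in> vertices \<Longrightarrow> u \<bullet> y = m \<longleftrightarrow> u = v"
    using assms unfolding width_exposed_def by blast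
  obtain \<epsilon> z \<kappa> where \<epsilon>: "\<epsilon> > 0" "z \<in> polar C" "0 \<le> \<kappa>" "\<kappa> \<le> 1"
    "(1 / m + \<epsilon>) *\<^sub>R y = (1 - \<kappa>) *\<^sub>R z + \<kappa> *\<^sub>R p"
    using min_direction_extension[OF y v] .
  have "(1 / m + \<epsilon>) *\<^sub>R y \<in> K"
    using convexD[OF \<open>convex K\<close>, of z p "1 - \<kappa>" \<kappa>] \<epsilon> K(2) p(1) by auto
  moreover have "- (1 / m) *\<^sub>R y \<in> K"
    using min_direction_polar_segment[OF y(1)] ends_in_segment K(2) by blast
  ultimately have seg: "closed_segment (- (1 / m) *\<^sub>R y) ((1 / m + \<epsilon>) *\<^sub>R y) \<subseteq> K"
    using closed_segment_subset \<open>convex K\<close> by blast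
  have diff: "(1 / m + \<epsilon>) *\<^sub>R y - - (1 / m) *\<^sub>R y = (2 / m + \<epsilon>) *\<^sub>R y"
    by (simp add: algebra_simps flip: scaleR_add_left)
  have "2 / m + \<epsilon> > 0"
    using m_pos \<epsilon>(1) by (simp add: add_pos_pos)
  note long = min_direction_segment[OF y(1) this diff]
  have "2 / m + \<epsilon> \<le> lattice_diameter (dual_lattice L) K"
    using lattice_length_le_diameter[OF span_L \<open>bounded K\<close> seg long(1,2)] long(3) by simp
  then show False
    using K(3) \<epsilon>(1) by simp
qed

text \<open>Segments in minimal directions are still bounded by a pair of opposite vertices other
  than \<open>v\<close>, whose facet inequalities are unchanged; in all other directions the relaxation is
  absorbed by the gap between \<open>m\<close> and the next support value.\<close>
lemma lattice_length_le_in_relaxed_polar: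
  assumes "\<not> width_exposed v" "0 \<le> t"
    and large: "\<And>y. y \<in> dual_lattice L \<Longrightarrow> m < support y \<Longrightarrow> (1 + t) * m \<le> support y"
    and ab: "closed_segment a b \<subseteq> relaxed_polar v t" "a \<noteq> b" "lattice_segment (dual_lattice L) a b"
  shows "lattice_length (dual_lattice L) a b \<le> 2 / m"
proof -
  let ?l = "lattice_length (dual_lattice L) a b"
  obtain g where g: "g \<in> dual_lattice L" "g \<noteq> 0" "?l > 0" "b - a = ?l *\<^sub>R g"
    using dual_lattice_segment_length[OF span_L ab(3,2)] by blast
  have "a \<in> relaxed_polar v t" "b \<in> relaxed_polar v t"
    using ab(1) ends_in_segment by blast+
  show ?thesis
  proof (cases "support g = m")
    case True
    then obtain u where u: "u \<in> vertices" "u \<noteq> v" "u \<noteq> - v" "u \<bullet> g = m"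
      using other_vertex_on_min_direction[OF assms(1), of g] g by (auto simp: min_directions_def)
    have "u \<in> vertices - {v}" "- u \<in> vertices - {v}"
      using u(1-3) uminus_vertex[OF u(1)] by auto
    then have "u \<bullet> b \<le> 1" "(- u) \<bullet> a \<le> 1"
      using \<open>a \<in> relaxed_polar v t\<close> \<open>b \<in> relaxed_polar v t\<close> unfolding relaxed_polar_def by blast+
    moreover have "?l * m = u \<bullet> b + (- u) \<bullet> a"
      using arg_cong[OF g(4), of "\<lambda>x. u \<bullet> x"] u(4) by (simp add: inner_diff_right)
    ultimately show ?thesis
      using m_pos by (simp add: field_simps)
  next
    case False
    then have "(1 + t) * m \<le> support g"
      using large minimum_le g(1,2) by force
    then have "(?l * m) * (1 + t) \<le> ?l * support g"
      using g(3) by (simp add: mult_ac)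
    also have "\<dots> \<le> support a + support b"
      using support_segment_le[OF g(4)] g(3) by simp
    also have "\<dots> \<le> 2 * (1 + t)"
      using support_le_relaxed_polar[OF assms(2) \<open>a \<in> relaxed_polar v t\<close>]
        support_le_relaxed_polar[OF assms(2) \<open>b \<in> relaxed_polar v t\<close>] by (simp add: algebra_simps)
    finally have "?l * m \<le> 2"
      by (rule mult_right_le_imp_le) (use assms(2) in simp)
    then show ?thesis
      using m_pos by (simp add: field_simps)
  qed
qed

lemma lattice_diameter_relaxed_polar:
  assumes "v \<in> vertices" "\<not> width_exposed v" "0 \<le> t"
    and "\<And>y. y \<in> dual_lattice L \<Longrightarrow> m < support y \<Longrightarrow> (1 + t) * m \<le> support y"
  shows "lattice_diameter (dual_lattice L) (relaxed_polar v t) = 2 / m"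
proof -
  obtain y where y: "y \<in> min_directions"
    using min_directions_nonempty by blast
  have "(1 / m) *\<^sub>R y - - (1 / m) *\<^sub>R y = (2 / m) *\<^sub>R y"
    by (simp add: scaleR_2 flip: scaleR_add_left)
  note seg = min_direction_segment[OF y _ this]
  have "closed_segment (- (1 / m) *\<^sub>R y) ((1 / m) *\<^sub>R y) \<subseteq> relaxed_polar v t"
    using min_direction_polar_segment[OF y] polar_subset_relaxed_polar[OF assms(1,3)] by blast
  from lattice_diameter_eqI[OF this seg] show ?thesis
    using lattice_length_le_in_relaxed_polar[OF assms(2-4)] m_pos by simp
qed

lemma width_exposed_if_lattice_complete:
  assumes "lattice_complete (dual_lattice L) (polar C)" "v \<in> vertices"
  shows "width_exposed v"
proof (rule ccontr)
  assume "\<not> width_exposed v"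
  obtain m2 where m2: "m2 > m" "\<And>y. y \<in> dual_lattice L \<Longrightarrow> m < support y \<Longrightarrow> m2 \<le> support y"
    using next_support_value by blast
  define t where "t = m2 / m - 1"
  have "t > 0" "(1 + t) * m = m2"
    using m2(1) m_pos by (auto simp: t_def field_simps)
  then have "lattice_diameter (dual_lattice L) (relaxed_polar v t) =
      lattice_diameter (dual_lattice L) (polar C)"
    unfolding lattice_diameter_polar using m2(2)
    by (intro lattice_diameter_relaxed_polar[OF assms(2) \<open>\<not> width_exposed v\<close>]) auto
  then show False
    using assms(1) convex_body_relaxed_polar[OF assms(2)] polar_psubset_relaxed_polar[OF assms(2)]
      \<open>t > 0\<close> unfolding lattice_complete_def by (meson less_imp_le)
qed

lemma lattice_reduced_iff_width_exposed:
  "lattice_reduced L C \<longleftrightarrow> (\<forall>v\<in>vertices. width_exposed v)"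
  using lattice_reduced_if_width_exposed width_exposed_if_lattice_reduced by blast

lemma lattice_complete_iff_width_exposed:
  "lattice_complete (dual_lattice L) (polar C) \<longleftrightarrow> (\<forall>v\<in>vertices. width_exposed v)"
  using lattice_complete_if_width_exposed width_exposed_if_lattice_complete by blast

end

theorem theorem3p8:
  fixes C :: "'a::euclidean_space set" and \<Lambda> :: "'a set"
  assumes "polytope C" and "interior C \<noteq> {}" and "\<forall>x\<in>C. - x \<in> C"
    and "is_lattice \<Lambda>"
  shows "width_directions \<Lambda> C = diameter_directions (dual_lattice \<Lambda>) (polar C) \<and>
         (lattice_reduced \<Lambda> C \<longleftrightarrow> lattice_complete (dual_lattice \<Lambda>) (polar C))"
proof -
  interpret symmetric_polytope C
    using assms(1-3) by unfold_locales auto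
  have span: "span \<Lambda> = UNIV"
    using assms(4) by (simp add: is_lattice_def)
  show ?thesis
  proof (cases "dual_lattice \<Lambda> \<subseteq> {0}")
    case True
    \<comment> \<open>Impossible for a lattice, but excluding it would need a basis of \<open>\<Lambda>\<close>.\<close>
    then have "width_directions \<Lambda> C = {}" "diameter_directions (dual_lattice \<Lambda>) (polar C) = {}"
      by (auto simp: width_directions_def diameter_directions_def)
    then show ?thesis
      using not_reduced_not_complete_if_trivial_dual[OF True] by simp
  next
    case False
    then obtain m where "\<exists>y\<in>dual_lattice \<Lambda> - {0}. support y = m"
      "\<And>y. y \<in> dual_lattice \<Lambda> \<Longrightarrow> y \<noteq> 0 \<Longrightarrow> m \<le> support y"
      using support_minimum_exists[OF span] by blast
    then interpret symmetric_polytope_lattice C \<Lambda> m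
      using span by unfold_locales auto
    show ?thesis
      using width_directions_eq diameter_directions_eq
        lattice_reduced_iff_width_exposed lattice_complete_iff_width_exposed by simp
  qed
qed

end
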